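(* Let $G$ be a finite abelian group. Then $\daleth^*(G) = \emptyset$ if and only if $|G|\le 2$. If $|G| \ge 3$, then $\daleth^*(G)$ is a finite interval of integers with $\min \daleth^*(G) = 3$.
   Context: For an abelian group $G$, $\mathcal B(G)$ is the monoid of zero-sum sequences over $G$: finite unordered sequences (with repetition) of elements of $G$ whose sum is $0$, with concatenation as operation. Its atoms are the minimal zero-sum sequences. For $A\in\mathcal B(G)$, $\mathsf L(A)$ is the set of all $k$ such that $A$ is a product of $k$ atoms. $\daleth^*(G) := \{\min(\mathsf L(UV)\setminus\{2\}) : U,V \text{ atoms of } \mathcal B(G),\ |\mathsf L(UV)|>1\}$. *)

theory Defs
  imports "HOL-Library.Multiset"
begin

text \<open>Sequences over G are finite multisets of elements of G; the group G is the
  ambient type 'a of class ab_group_add (finite where needed).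
  B(G) is the monoid of zero-sum sequences under concatenation (multiset sum).\<close>

definition zero_sum :: "'a::ab_group_add multiset \<Rightarrow> bool" where
  "zero_sum A \<longleftrightarrow> sum_mset A = 0"

definition atom :: "'a::ab_group_add multiset \<Rightarrow> bool" where
  "atom A \<longleftrightarrow> zero_sum A \<and> A \<noteq> {#} \<and>
     (\<forall>S. S \<subseteq># A \<and> S \<noteq> {#} \<and> zero_sum S \<longrightarrow> S = A)"

definition lengths :: "'a::ab_group_add multiset \<Rightarrow> nat set" where
  "lengths A = {k. \<exists>F :: 'a multiset multiset.
      size F = k \<and> (\<forall>U \<in># F. atom U) \<and> sum_mset F = A}"

definition daleth_star :: "'a::ab_group_add itself \<Rightarrow> nat set" where
  "daleth_star (_ :: 'a itself) =
     {Min (lengths (U + V) - {2}) | U V :: 'a multiset.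
        atom U \<and> atom V \<and> card (lengths (U + V)) > 1}"

end

theory Submission
  imports Defs
begin

text \<open>Every length of \<open>UV\<close> other than 2 is at least 3, and at most \<open>|U| + |V| \<le> 2|G|\<close> by
  Davenport's bound, so \<open>\<daleth>\<^sup>*(G) \<subseteq> [3, 2|G|]\<close>. If \<open>|G| \<le> 2\<close>, every atom is \<open>0\<close> or
  \<open>g g\<close>, so twice the length of any factorization of \<open>A\<close> is \<open>|A|\<close> plus the number of
  zeros in \<open>A\<close>, and \<open>\<daleth>\<^sup>*(G) = \<emptyset>\<close>. If \<open>|G| \<ge> 3\<close>, pick \<open>x, y, x + y\<close> nonzero: for
  \<open>U = x y (-x-y)\<close> and \<open>V = -U\<close>, \<open>UV = (x(-x)) (y(-y)) ((x+y)(-x-y))\<close>, so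
  \<open>3 \<in> \<daleth>\<^sup>*(G)\<close>.

  It remains to show that \<open>k \<ge> 4\<close> in \<open>\<daleth>\<^sup>*(G)\<close> implies \<open>k - 1 \<in> \<daleth>\<^sup>*(G)\<close>. Let
  \<open>k = min (L(UV) \<setminus> {2})\<close> and \<open>UV = W\<^sub>1 \<cdots> W\<^sub>k\<close>; split each \<open>W\<^sub>i = A\<^sub>i B\<^sub>i\<close> with
  \<open>A\<^sub>i | U\<close>, \<open>B\<^sub>i | V\<close>, both nonempty as \<open>k \<noteq> 2\<close>. Replacing two elements \<open>g, h\<close> of some
  \<open>A\<^sub>i\<close> by \<open>g + h\<close> in \<open>U\<close> and in \<open>W\<^sub>i\<close> keeps all of them atoms, keeps the length \<open>k\<close>,
  and lowers every length by at most one; so the new minimum is \<open>k - 1\<close>, or it is \<open>k\<close> for a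
  shorter atom and we recurse. If all \<open>A\<^sub>i, B\<^sub>i\<close> are singletons, then \<open>W\<^sub>i = a\<^sub>i (-a\<^sub>i)\<close>,
  and merging \<open>a\<^sub>1, a\<^sub>2\<close> in \<open>U\<close> yields the factorization
  \<open>((a\<^sub>1 + a\<^sub>2) (-a\<^sub>1) (-a\<^sub>2)) W\<^sub>3 \<cdots> W\<^sub>k\<close> of length \<open>k - 1\<close>.\<close>

lemma atom_sum_mset_eq_0: "atom W \<Longrightarrow> sum_mset W = 0"
  by (simp add: atom_def zero_sum_def)

lemma atom_not_empty: "atom W \<Longrightarrow> W \<noteq> {#}"
  by (simp add: atom_def)

lemma atom_minimal: "atom W \<Longrightarrow> S \<subseteq># W \<Longrightarrow> S \<noteq> {#} \<Longrightarrow> sum_mset S = 0 \<Longrightarrow> S = W"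
  by (simp add: atom_def zero_sum_def)

lemma atomI:
  assumes "sum_mset W = 0" "W \<noteq> {#}"
    and "\<And>S. S \<subseteq># W \<Longrightarrow> S \<noteq> {#} \<Longrightarrow> sum_mset S = 0 \<Longrightarrow> S = W"
  shows "atom W"
  using assms by (auto simp: atom_def zero_sum_def)

lemma atom_proper_subset_sum_neq_0:
  "atom W \<Longrightarrow> S \<subset># W \<Longrightarrow> S \<noteq> {#} \<Longrightarrow> sum_mset S \<noteq> 0"
  using atom_minimal[of W S] by (auto simp: subset_mset.less_le)

lemma atom_of_size_le_3:
  fixes W :: "'a::ab_group_add multiset"
  assumes "size W \<le> 3" "W \<noteq> {#}" "sum_mset W = 0" "0 \<notin># W"
  shows "atom W"
proof (rule atomI[OF assms(3,2)])
  have no_zero_singleton: False if T: "T \<subseteq># W" "size T = 1" "sum_mset T = 0" for T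
  proof -
    obtain a where "T = {#a#}" using T(2) size_1_singleton_mset by blast
    then show False using T(1,3) assms(4) by simp
  qed
  fix S assume S: "S \<subseteq># W" "S \<noteq> {#}" "sum_mset S = 0"
  show "S = W"
  proof (rule ccontr)
    assume "S \<noteq> W"
    define R where "R = W - S"
    have W: "W = S + R" using S(1) by (simp add: R_def)
    then have "R \<noteq> {#}" using \<open>S \<noteq> W\<close> by auto
    have "size S + size R \<le> 3" using W assms(1) by simp
    moreover have "size S \<noteq> 0" "size R \<noteq> 0" using S(2) \<open>R \<noteq> {#}\<close> by auto
    ultimately have "size S = 1 \<or> size R = 1" by linarith
    moreover have "sum_mset R = 0" using W S(3) assms(3) by simp
    moreover have "R \<subseteq># W" using W by simp
    ultimately show False using no_zero_singleton S by blast
  qed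
qed

lemma atom_pair: "(x::'a::ab_group_add) \<noteq> 0 \<Longrightarrow> atom {#x, - x#}"
  by (rule atom_of_size_le_3) auto

lemma size_le_size_sum_mset: "(\<forall>W\<in>#F. W \<noteq> {#}) \<Longrightarrow> size F \<le> size (sum_mset F)"
proof (induction F)
  case (add W F)
  then have "1 \<le> size W" by (simp add: Suc_le_eq nonempty_has_size)
  with add show ?case by simp
qed simp

lemma lengths_le_size:
  assumes "l \<in> lengths A"
  shows "l \<le> size A"
proof -
  obtain F where F: "size F = l" "\<forall>W\<in>#F. atom W" "sum_mset F = A"
    using assms unfolding lengths_def by blast
  then have "\<forall>W\<in>#F. W \<noteq> {#}" using atom_not_empty by blast
  then show ?thesis using F size_le_size_sum_mset by metis
qed

lemma finite_lengths: "finite (lengths A)"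
  by (rule finite_subset[OF _ finite_atMost[of "size A"]]) (auto dest: lengths_le_size)

lemma lengths_atom:
  assumes "atom U"
  shows "lengths U = {1}"
proof -
  have "size F = 1" if F: "\<forall>W\<in>#F. atom W" "sum_mset F = U" for F
  proof -
    obtain W F0 where F0: "F = add_mset W F0"
      using F(2) atom_not_empty[OF assms] by (cases F) auto
    have "atom W" using F(1) F0 by simp
    moreover have "W \<subseteq># U" using F(2) F0 by auto
    ultimately have "W = U" using atom_minimal[OF assms] atom_not_empty atom_sum_mset_eq_0 by blast
    then have "sum_mset F0 = {#}" using F(2) F0 by simp
    then have "F0 = {#}" using F(1) F0 atom_not_empty by (cases F0) auto
    then show ?thesis using F0 by simp
  qed
  moreover have "1 \<in> lengths U"
    unfolding lengths_def using assms by (intro CollectI exI[of _ "{#U#}"]) auto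
  ultimately show ?thesis unfolding lengths_def by blast
qed

lemma atom_factorization_exists:
  "sum_mset A = (0::'a::ab_group_add) \<Longrightarrow> \<exists>F. (\<forall>W\<in>#F. atom W) \<and> sum_mset F = A"
proof (induction "size A" arbitrary: A rule: less_induct)
  case less
  consider "A = {#}" | "atom A" | S where "S \<subset># A" "S \<noteq> {#}" "sum_mset S = 0"
    using less.prems unfolding atom_def zero_sum_def by (auto simp: subset_mset.less_le)
  then show ?case
  proof cases
    case 1
    then show ?thesis by (intro exI[of _ "{#}"]) simp
  next
    case 2
    then show ?thesis by (intro exI[of _ "{#A#}"]) simp
  next
    case (3 S)
    have A: "A = S + (A - S)" using 3(1) by simp
    have "size S < size A" using 3(1) by (rule mset_subset_size)
    moreover have "size (A - S) < size A"
      using 3(1,2) mset_subset_size[OF 3(1)]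
      by (simp add: size_Diff_submset subset_mset.less_imp_le nonempty_has_size)
    moreover have "sum_mset (A - S) = 0" using A 3(3) less.prems by (metis add_0 sum_mset.union)
    ultimately obtain FS FR where "\<forall>W\<in>#FS. atom W" "sum_mset FS = S"
        "\<forall>W\<in>#FR. atom W" "sum_mset FR = A - S"
      using less.hyps 3(3) by blast
    then show ?thesis using A by (intro exI[of _ "FS + FR"]) auto
  qed
qed

lemma two_mem_lengths: "atom U \<Longrightarrow> atom V \<Longrightarrow> 2 \<in> lengths (U + V)"
  unfolding lengths_def by (intro CollectI exI[of _ "{#U, V#}"]) auto

lemma lengths_ge_3:
  assumes "atom U" "atom V" "l \<in> lengths (U + V)" "l \<noteq> 2"
  shows "3 \<le> l"
proof -
  obtain F where F: "size F = l" "\<forall>W\<in>#F. atom W" "sum_mset F = U + V"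
    using assms(3) unfolding lengths_def by blast
  have "l \<noteq> 0" using F atom_not_empty[OF assms(1)] by (cases F) auto
  moreover have "l \<noteq> 1"
  proof
    assume "l = 1"
    then obtain W where "F = {#W#}" using F(1) size_1_singleton_mset by blast
    then have "atom (U + V)" using F by simp
    moreover have "U \<subset># U + V" using atom_not_empty[OF assms(2)] by (simp add: subset_mset.less_le)
    ultimately have "sum_mset U \<noteq> 0"
      using atom_proper_subset_sum_neq_0 atom_not_empty[OF assms(1)] by blast
    then show False using atom_sum_mset_eq_0[OF assms(1)] by contradiction
  qed
  ultimately show ?thesis using assms(4) by linarith
qed

text \<open>\<open>daleth_witness U V k\<close> says \<open>k = min (L(UV) \<setminus> {2})\<close>; as \<open>0, 1 \<notin> L(UV)\<close>, this is the
  least length \<open>\<ge> 3\<close>.\<close>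

definition daleth_witness :: "'a::ab_group_add multiset \<Rightarrow> 'a multiset \<Rightarrow> nat \<Rightarrow> bool" where
  "daleth_witness U V k \<longleftrightarrow> atom U \<and> atom V \<and> 3 \<le> k \<and> k \<in> lengths (U + V) \<and>
     (\<forall>l\<in>lengths (U + V). 3 \<le> l \<longrightarrow> k \<le> l)"

lemma daleth_witness_swap: "daleth_witness U V k \<Longrightarrow> daleth_witness V U k"
  by (simp add: daleth_witness_def add.commute)

lemma mem_daleth_star_iff:
  "k \<in> daleth_star TYPE('a::ab_group_add) \<longleftrightarrow> (\<exists>U V::'a multiset. daleth_witness U V k)"
proof
  assume "k \<in> daleth_star TYPE('a)"
  then obtain U V :: "'a multiset" where UV: "k = Min (lengths (U + V) - {2})" "atom U" "atom V"
      "card (lengths (U + V)) > 1"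
    unfolding daleth_star_def by blast
  let ?L = "lengths (U + V)"
  have "\<not> ?L \<subseteq> {2}" using UV(4) card_mono[of "{2}" ?L] by auto
  then have "?L - {2} \<noteq> {}" by blast
  moreover have fin: "finite (?L - {2})" using finite_lengths by blast
  ultimately have "k \<in> ?L - {2}" unfolding UV(1) by (rule Min_in[rotated])
  moreover have "\<forall>l\<in>?L - {2}. k \<le> l" unfolding UV(1) using Min_le[OF fin] by blast
  ultimately have "daleth_witness U V k"
    using UV(2,3) lengths_ge_3 by (auto simp: daleth_witness_def)
  then show "\<exists>U V::'a multiset. daleth_witness U V k" by blast
next
  assume "\<exists>U V::'a multiset. daleth_witness U V k"
  then obtain U V :: "'a multiset" where UV: "atom U" "atom V" "3 \<le> k" "k \<in> lengths (U + V)"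
      "\<forall>l\<in>lengths (U + V). 3 \<le> l \<longrightarrow> k \<le> l"
    unfolding daleth_witness_def by blast
  let ?L = "lengths (U + V)"
  have "card {2, k} \<le> card ?L"
    using UV two_mem_lengths finite_lengths by (intro card_mono) auto
  then have "card ?L > 1" using UV(3) by simp
  moreover have "Min (?L - {2}) = k"
    using UV lengths_ge_3 finite_lengths by (intro Min_eqI) auto
  ultimately show "k \<in> daleth_star TYPE('a)"
    unfolding daleth_star_def using UV(1,2) by blast
qed

text \<open>Davenport's bound: among the partial sums of an atom of length \<open>n > |G|\<close> two coincide,
  and the elements between them form a shorter zero-sum subsequence.\<close>

lemma atom_size_le_card:
  assumes "atom (W::'a::{finite,ab_group_add} multiset)"
  shows "size W \<le> card (UNIV :: 'a set)"
proof (rule ccontr)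
  assume "\<not> ?thesis"
  obtain xs where xs: "mset xs = W" using ex_mset by blast
  let ?s = "\<lambda>i. sum_list (take i xs)"
  have "\<not> inj_on ?s {0..<length xs}"
  proof
    assume "inj_on ?s {0..<length xs}"
    then have "card {0..<length xs} \<le> card (UNIV :: 'a set)" by (rule card_inj_on_le) auto
    then show False using \<open>\<not> size W \<le> card (UNIV :: 'a set)\<close> xs by auto
  qed
  then obtain i j where ij: "i < j" "j < length xs" "?s i = ?s j"
    unfolding inj_on_def by (metis atLeastLessThan_iff linorder_neqE_nat)
  define ys where "ys = drop i (take j xs)"
  have take_j: "take j xs = take i xs @ ys"
    unfolding ys_def using ij(1) by (metis append_take_drop_id less_imp_le_nat take_take min_absorb1)
  then have split: "xs = take i xs @ ys @ drop j xs" by (metis append.assoc append_take_drop_id)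
  have "mset ys \<subseteq># mset (take i xs @ ys @ drop j xs)" by simp
  then have "mset ys \<subseteq># W" by (simp only: split[symmetric] xs)
  moreover have "sum_mset (mset ys) = 0" using take_j ij(3) by (simp add: sum_mset_sum_list)
  moreover have "length ys = j - i" using ij unfolding ys_def by simp
  then have "mset ys \<noteq> {#}" using ij(1) by auto
  ultimately have "mset ys = W" using atom_minimal[OF assms] by blast
  then show False using xs \<open>length ys = j - i\<close> ij by (metis size_mset diff_le_self leD le_less_trans)
qed

lemma lengths_le_2_card:
  assumes "atom (U::'a::{finite,ab_group_add} multiset)" "atom V" "l \<in> lengths (U + V)"
  shows "l \<le> 2 * card (UNIV :: 'a set)"
  using lengths_le_size[OF assms(3)] atom_size_le_card[OF assms(1)] atom_size_le_card[OF assms(2)]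
  by simp

lemma daleth_star_subset:
  "daleth_star TYPE('a::{finite,ab_group_add}) \<subseteq> {3..2 * card (UNIV :: 'a set)}"
proof
  fix k assume "k \<in> daleth_star TYPE('a)"
  then obtain U V :: "'a multiset" where "daleth_witness U V k"
    using mem_daleth_star_iff by blast
  then show "k \<in> {3..2 * card (UNIV :: 'a set)}"
    using lengths_le_2_card unfolding daleth_witness_def by auto
qed

lemma nonzero_eq_if_card_le_2:
  fixes x y :: "'a::{finite,ab_group_add}"
  assumes "card (UNIV :: 'a set) \<le> 2" "x \<noteq> 0" "y \<noteq> 0"
  shows "x = y"
proof (rule ccontr)
  assume "x \<noteq> y"
  then have "card {0, x, y} = 3" using assms(2,3) by simp
  moreover have "card {0, x, y} \<le> card (UNIV :: 'a set)" by (rule card_mono) auto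
  ultimately show False using assms(1) by simp
qed

text \<open>For \<open>|G| \<le> 2\<close> the atoms are \<open>0\<close> and \<open>g g\<close> with \<open>g \<noteq> 0\<close>.\<close>

lemma atom_card_le_2:
  assumes "card (UNIV :: 'a::{finite,ab_group_add} set) \<le> 2" "atom (W :: 'a multiset)"
  shows "count W 0 + size W = 2"
proof (cases "0 \<in># W")
  case True
  then have "{#0#} = W" using atom_minimal[OF assms(2), of "{#0#}"] by simp
  then show ?thesis by auto
next
  case False
  obtain x W1 where W1: "W = add_mset x W1" using atom_not_empty[OF assms(2)] by (cases W) auto
  have "x \<noteq> 0" using False W1 by auto
  then have "x + x \<noteq> x" by simp
  then have xx: "x + x = 0" using nonzero_eq_if_card_le_2[OF assms(1)] \<open>x \<noteq> 0\<close> by blast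
  have "W1 \<noteq> {#}" using W1 atom_sum_mset_eq_0[OF assms(2)] \<open>x \<noteq> 0\<close> by auto
  then obtain y W2 where W2: "W1 = add_mset y W2" by (cases W1) auto
  then have "y = x" using nonzero_eq_if_card_le_2[OF assms(1)] False W1 \<open>x \<noteq> 0\<close> by auto
  then have "{#x, x#} = W" using atom_minimal[OF assms(2), of "{#x, x#}"] W1 W2 xx by simp
  then show ?thesis using \<open>x \<noteq> 0\<close> by auto
qed

lemma lengths_card_le_2:
  assumes "card (UNIV :: 'a::{finite,ab_group_add} set) \<le> 2" "l \<in> lengths (A :: 'a multiset)"
  shows "2 * l = count A 0 + size A"
proof -
  obtain F where F: "size F = l" "\<forall>W\<in>#F. atom W" "sum_mset F = A"
    using assms(2) unfolding lengths_def by blast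
  have "count (sum_mset F) 0 + size (sum_mset F) = 2 * size F"
    using F(2)
  proof (induction F)
    case (add W F)
    then have "count W 0 + size W = 2" using atom_card_le_2[OF assms(1)] by simp
    with add show ?case by simp
  qed simp
  then show ?thesis using F by simp
qed

lemma daleth_star_card_le_2:
  assumes "card (UNIV :: 'a::{finite,ab_group_add} set) \<le> 2"
  shows "daleth_star TYPE('a) = {}"
proof -
  have False if "daleth_witness U V k" for U V :: "'a multiset" and k
  proof -
    have "k \<in> lengths (U + V)" "2 \<in> lengths (U + V)" "3 \<le> k"
      using that two_mem_lengths unfolding daleth_witness_def by auto
    then have "2 * k = 2 * 2"
      using lengths_card_le_2[OF assms] by metis
    then show False using \<open>3 \<le> k\<close> by simp
  qed
  then show ?thesis using mem_daleth_star_iff by blast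
qed

lemma ex_nonzero_sum_nonzero:
  assumes "3 \<le> card (UNIV :: 'a::{finite,ab_group_add} set)"
  shows "\<exists>x y :: 'a. x \<noteq> 0 \<and> y \<noteq> 0 \<and> x + y \<noteq> 0"
proof -
  have "2 \<le> card (UNIV - {0 :: 'a})" using assms by (simp add: card_Diff_singleton)
  then obtain T where "T \<subseteq> UNIV - {0 :: 'a}" "card T = 2" by (meson obtain_subset_with_card_n)
  then obtain x y :: 'a where xy: "x \<noteq> 0" "y \<noteq> 0" "x \<noteq> y" by (auto simp: card_2_iff)
  show ?thesis
  proof (cases "x + y = 0")
    case True
    then have "x + x \<noteq> 0" using xy(3) by (metis add_left_cancel)
    then show ?thesis using xy(1) by blast
  next
    case False
    then show ?thesis using xy(1,2) by blast
  qed
qed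

lemma three_mem_daleth_star:
  assumes "3 \<le> card (UNIV :: 'a::{finite,ab_group_add} set)"
  shows "3 \<in> daleth_star TYPE('a)"
proof -
  obtain x y :: 'a where xy: "x \<noteq> 0" "y \<noteq> 0" "x + y \<noteq> 0"
    using ex_nonzero_sum_nonzero[OF assms] by blast
  define U where "U = {#x, y, - (x + y)#}"
  define V where "V = {#- x, - y, x + y#}"
  have "atom U" "atom V"
    unfolding U_def V_def using xy by (auto intro!: atom_of_size_le_3 simp: algebra_simps)
  define F where "F = {#{#x, - x#}, {#y, - y#}, {#x + y, - (x + y)#}#}"
  have "\<forall>W\<in>#F. atom W"
    unfolding F_def using xy atom_pair[of x] atom_pair[of y] atom_pair[of "x + y"] by simp
  moreover have "sum_mset F = U + V" "size F = 3"
    unfolding F_def U_def V_def by (simp_all add: add_mset_commute)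
  ultimately have "3 \<in> lengths (U + V)" unfolding lengths_def by blast
  then have "daleth_witness U V 3"
    using \<open>atom U\<close> \<open>atom V\<close> unfolding daleth_witness_def by auto
  then show ?thesis using mem_daleth_star_iff by blast
qed

definition merge_pair :: "'a::ab_group_add multiset \<Rightarrow> 'a \<Rightarrow> 'a \<Rightarrow> 'a multiset" where
  "merge_pair M g h = add_mset (g + h) (M - {#g, h#})"

lemma merge_pair_add: "{#g, h#} \<subseteq># U \<Longrightarrow> merge_pair (U + V) g h = merge_pair U g h + V"
  unfolding merge_pair_def by simp

lemma size_merge_pair: "{#g, h#} \<subseteq># M \<Longrightarrow> size (merge_pair M g h) < size M"
  unfolding merge_pair_def using size_mset_mono[of "{#g, h#}" M] by (simp add: size_Diff_submset)

lemma subset_add_mset_not_mem: "x \<notin># S \<Longrightarrow> S \<subseteq># add_mset x N \<Longrightarrow> S \<subseteq># N"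
  unfolding subseteq_mset_def by (metis count_add_mset count_eq_zero_iff le0)

lemma atom_merge_pair:
  assumes "atom W" "{#g, h#} \<subseteq># W"
  shows "atom (merge_pair W g h)"
proof -
  define N where "N = W - {#g, h#}"
  have W: "W = {#g, h#} + N" using assms(2) unfolding N_def by (metis subset_mset.add_diff_inverse)
  have merge: "merge_pair W g h = add_mset (g + h) N" unfolding merge_pair_def N_def ..
  show ?thesis unfolding merge
  proof (rule atomI)
    show "sum_mset (add_mset (g + h) N) = 0"
      using atom_sum_mset_eq_0[OF assms(1)] W by (simp add: add.assoc)
    fix S assume S: "S \<subseteq># add_mset (g + h) N" "S \<noteq> {#}" "sum_mset S = 0"
    show "S = add_mset (g + h) N"
    proof (cases "g + h \<in># S")
      case True
      then obtain S' where S': "S = add_mset (g + h) S'" by (metis multi_member_split)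
      then have "{#g, h#} + S' \<subseteq># W" "sum_mset ({#g, h#} + S') = 0"
        using S(1,3) W by (simp_all add: add.assoc)
      then have "{#g, h#} + S' = W" using atom_minimal[OF assms(1)] by simp
      then show ?thesis using S' W by simp
    next
      case False
      then have "S \<subseteq># N" using S(1) by (rule subset_add_mset_not_mem)
      then have "S \<subset># W" using W by (simp add: subset_mset.le_less_trans)
      then show ?thesis using S(2,3) atom_proper_subset_sum_neq_0[OF assms(1)] by blast
    qed
  qed simp
qed

lemma size_diff_less_size_add_diff:
  assumes "\<not> W \<subseteq># X"
  shows "size (S - X) < size (W + S - X)"
proof -
  obtain a where a: "count X a < count W a" using assms by (auto simp: subseteq_mset_def not_le)
  have "S - X \<subseteq># W + S - X" by (simp add: subseteq_mset_def diff_le_mono)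
  moreover have "count (S - X) a \<noteq> count (W + S - X) a" using a by simp
  ultimately have "S - X \<subset># W + S - X" by (metis subset_mset.le_imp_less_or_eq)
  then show ?thesis by (rule mset_subset_size)
qed

lemma size_le_size_sum_mset_diff:
  "(\<forall>W\<in>#F. \<not> W \<subseteq># X) \<Longrightarrow> size F \<le> size (sum_mset F - X)"
proof (induction F)
  case (add W F)
  then have "size F \<le> size (sum_mset F - X)" "\<not> W \<subseteq># X" by auto
  then show ?case using size_diff_less_size_add_diff[of W X "sum_mset F"] by simp
qed simp

text \<open>Splitting \<open>g + h\<close> back into \<open>g, h\<close> inside its atom \<open>W\<close> leaves a zero-sum sequence
  \<open>g h N\<close>, where \<open>N \<subset> W\<close> has no zero-sum subsequence; so each of its atoms contains
  \<open>g\<close> or \<open>h\<close>, and there are at most two of them.\<close>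

lemma lengths_merge_pair:
  assumes "{#g, h#} \<subseteq># M" "l \<in> lengths (merge_pair M g h)"
  shows "l \<in> lengths M \<or> Suc l \<in> lengths M"
proof -
  obtain F where F: "size F = l" "\<forall>W\<in>#F. atom W" "sum_mset F = merge_pair M g h"
    using assms(2) unfolding lengths_def by blast
  have "g + h \<in># sum_mset F" using F(3) unfolding merge_pair_def by simp
  then obtain W where "W \<in># F" "g + h \<in># W" by auto
  obtain F0 where F0: "F = add_mset W F0" using \<open>W \<in># F\<close> by (metis multi_member_split)
  obtain N where N: "W = add_mset (g + h) N" using \<open>g + h \<in># W\<close> by (metis multi_member_split)
  have "M - {#g, h#} = N + sum_mset F0"
    using F(3) F0 N unfolding merge_pair_def by simp
  moreover have "M = {#g, h#} + (M - {#g, h#})"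
    using assms(1) by (metis subset_mset.add_diff_inverse)
  ultimately have M: "M = ({#g, h#} + N) + sum_mset F0" by (simp add: add.assoc)
  have "atom W" using F(2) F0 by simp
  then have "sum_mset ({#g, h#} + N) = 0" using atom_sum_mset_eq_0[of W] N by (simp add: add.assoc)
  then obtain G where G: "\<forall>V\<in>#G. atom V" "sum_mset G = {#g, h#} + N"
    using atom_factorization_exists by blast
  have "\<not> V \<subseteq># N" if "V \<in># G" for V
  proof
    assume "V \<subseteq># N"
    then have "V \<subset># W" using N by (simp add: subset_mset.le_less_trans)
    moreover have "atom V" using that G(1) by blast
    ultimately show False
      using atom_proper_subset_sum_neq_0[OF \<open>atom W\<close>] atom_not_empty atom_sum_mset_eq_0 by blast
  qed
  then have "size G \<le> 2" using size_le_size_sum_mset_diff[of G N] G(2) by simp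
  moreover have "size G \<noteq> 0" using G(2) by auto
  ultimately have "size G = 1 \<or> size G = 2" by linarith
  moreover have "size G + size F0 \<in> lengths M"
    unfolding lengths_def using G F(2) F0 M by (intro CollectI exI[of _ "G + F0"]) auto
  moreover have "l = Suc (size F0)" using F(1) F0 by simp
  ultimately show ?thesis by auto
qed

lemma subset_mset_add_split:
  assumes "W \<subseteq># U + V"
  shows "\<exists>A B. A \<subseteq># U \<and> B \<subseteq># V \<and> W = A + B"
proof (intro exI conjI)
  show "W - W \<inter># U \<subseteq># V" using assms by (simp add: subset_eq_diff_conv add.commute)
  show "W = W \<inter># U + (W - W \<inter># U)" by (simp add: multiset_eq_iff min_def)
qed simp

lemma sum_mset_split:
  fixes F :: "'a multiset multiset"
  shows "sum_mset F = U + V \<Longrightarrow> \<exists>P. image_mset (\<lambda>p. fst p + snd p) P = F \<and>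
     sum_mset (image_mset fst P) = U \<and> sum_mset (image_mset snd P) = V"
proof (induction F arbitrary: U V)
  case empty
  then have "U + V = {#}" by simp
  then have "U = {#}" "V = {#}" by (simp_all only: union_eq_empty)
  then show ?case by (intro exI[of _ "{#}"]) simp
next
  case (add W F)
  then have "W \<subseteq># U + V" by (metis mset_subset_eq_add_left sum_mset.add_mset)
  then obtain A B where AB: "A \<subseteq># U" "B \<subseteq># V" "W = A + B"
    using subset_mset_add_split by blast
  have "sum_mset F = U + V - W" using add.prems by (metis add_diff_cancel_left' sum_mset.add_mset)
  also have "\<dots> = (U - A) + (V - B)" using AB by (simp add: multiset_eq_iff subseteq_mset_def)
  finally obtain P where P: "image_mset (\<lambda>p. fst p + snd p) P = F"
      "sum_mset (image_mset fst P) = U - A" "sum_mset (image_mset snd P) = V - B"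
    using add.IH by blast
  show ?case
    using P AB by (intro exI[of _ "add_mset (A, B) P"]) (simp add: subset_mset.add_diff_inverse)
qed

lemma atom_factor_not_subset:
  assumes "atom U" "atom V" "\<forall>W\<in>#F. atom W" "sum_mset F = U + V" "size F \<noteq> 2" "W \<in># F"
  shows "\<not> W \<subseteq># V"
proof
  assume "W \<subseteq># V"
  moreover have "atom W" using assms(3,6) by blast
  ultimately have "W = V" using atom_minimal[OF assms(2)] atom_not_empty atom_sum_mset_eq_0 by blast
  then obtain F0 where F0: "F = add_mset V F0" using assms(6) by (metis multi_member_split)
  then have "size F0 \<in> lengths U" using assms(3,4) unfolding lengths_def by auto
  then show False using lengths_atom[OF assms(1)] F0 assms(5) by simp
qed

lemma size_mem_lengths_merge_pair:
  assumes "\<forall>W\<in>#F. atom W" "sum_mset F = U + V" "W \<in># F" "{#g, h#} \<subseteq># W" "{#g, h#} \<subseteq># U"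
  shows "size F \<in> lengths (merge_pair U g h + V)"
proof -
  obtain F0 where F0: "F = add_mset W F0" using assms(3) by (metis multi_member_split)
  define F' where "F' = add_mset (merge_pair W g h) F0"
  have "sum_mset F' = merge_pair (sum_mset F) g h"
    unfolding F'_def F0 using merge_pair_add[OF assms(4)] by simp
  also have "\<dots> = merge_pair U g h + V" using assms(2) merge_pair_add[OF assms(5)] by simp
  finally have "sum_mset F' = merge_pair U g h + V" .
  moreover have "\<forall>X\<in>#F'. atom X" using assms(1,3,4) F0 atom_merge_pair unfolding F'_def by auto
  moreover have "size F' = size F" unfolding F'_def F0 by simp
  ultimately show ?thesis unfolding lengths_def by blast
qed

lemma daleth_witness_merge_pair_lengths:
  assumes "daleth_witness U V k" "{#g, h#} \<subseteq># U"
    and "l \<in> lengths (merge_pair U g h + V)" "3 \<le> l"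
  shows "k - 1 \<le> l"
proof -
  have "{#g, h#} \<subseteq># U + V" using assms(2) by (simp add: subset_mset.add_increasing2)
  moreover have "l \<in> lengths (merge_pair (U + V) g h)" using merge_pair_add[OF assms(2)] assms(3) by simp
  ultimately have "l \<in> lengths (U + V) \<or> Suc l \<in> lengths (U + V)" by (rule lengths_merge_pair)
  then show ?thesis using assms(1,4) unfolding daleth_witness_def by fastforce
qed

lemma daleth_witness_merge_pair_pred:
  assumes "daleth_witness U V k" "4 \<le> k" "{#g, h#} \<subseteq># U"
    and "k - 1 \<in> lengths (merge_pair U g h + V)"
  shows "daleth_witness (merge_pair U g h) V (k - 1)"
  using assms daleth_witness_merge_pair_lengths[OF assms(1,3)] atom_merge_pair[OF _ assms(3)]
  unfolding daleth_witness_def by auto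

lemma daleth_witness_merge_pair:
  assumes "daleth_witness U V k" "4 \<le> k" "{#g, h#} \<subseteq># U"
    and "k \<in> lengths (merge_pair U g h + V)"
  shows "daleth_witness (merge_pair U g h) V (k - 1) \<or> daleth_witness (merge_pair U g h) V k"
proof (cases "k - 1 \<in> lengths (merge_pair U g h + V)")
  case True
  then show ?thesis using daleth_witness_merge_pair_pred[OF assms(1-3)] by blast
next
  case False
  have "k \<le> l" if "l \<in> lengths (merge_pair U g h + V)" "3 \<le> l" for l
  proof -
    have "l \<noteq> k - 1" using False that(1) by blast
    then show ?thesis using daleth_witness_merge_pair_lengths[OF assms(1,3) that] by arith
  qed
  then show ?thesis
    using assms atom_merge_pair[OF _ assms(3)] unfolding daleth_witness_def by auto
qed

lemma singleton_parts_eq: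
  assumes "image_mset (\<lambda>p. fst p + snd p) P = F" "\<forall>W\<in>#F. atom W"
    and "p \<in># P" "size (fst p) = 1" "size (snd p) = 1"
  shows "\<exists>a. p = ({#a#}, {#- a#})"
proof -
  obtain a b where ab: "fst p = {#a#}" "snd p = {#b#}" using assms(4,5) by (meson size_1_singleton_mset)
  have "fst p + snd p \<in># F" using assms(3) unfolding assms(1)[symmetric] by simp
  then have "atom (fst p + snd p)" using assms(2) by blast
  then have "sum_mset (fst p + snd p) = 0" by (rule atom_sum_mset_eq_0)
  then have "b = - a" using ab by (simp add: eq_neg_iff_add_eq_0)
  then show ?thesis using ab by (intro exI[of _ a]) (simp add: prod_eq_iff)
qed

lemma atom_merged_pair_negatives:
  assumes "atom U" "{#a, b#} \<subset># U"
  shows "atom {#a + b, - a, - b#}"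
proof -
  have "{#a#} \<subset># U" "{#b#} \<subset># U"
    using assms(2) by (metis add_mset_commute mset_subset_eq_add_mset_cancel subset_mset.le_less_trans
        subset_mset.zero_le empty_subset_add_mset)+
  then have "a + b \<noteq> 0" "a \<noteq> 0" "b \<noteq> 0"
    using assms atom_proper_subset_sum_neq_0 by fastforce+
  then show ?thesis by (intro atom_of_size_le_3) (auto simp: algebra_simps)
qed

lemma daleth_witness_pred_of_singleton_parts:
  assumes witness: "daleth_witness U V k" and "4 \<le> k"
    and P: "image_mset (\<lambda>p. fst p + snd p) P = F" "sum_mset (image_mset fst P) = U"
      "sum_mset (image_mset snd P) = V"
    and F: "\<forall>W\<in>#F. atom W" "size F = k"
    and singletons: "\<forall>p\<in>#P. size (fst p) = 1 \<and> size (snd p) = 1"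
  shows "\<exists>a b. daleth_witness (merge_pair U a b) V (k - 1)"
proof -
  have pair: "\<exists>a. p = ({#a#}, {#- a#})" if "p \<in># P" for p
    using singleton_parts_eq[OF P(1) F(1) that] singletons that by blast
  have "size P = k" using F(2) unfolding P(1)[symmetric] by simp
  then obtain p1 P1 where P1: "P = add_mset p1 P1" using \<open>4 \<le> k\<close> by (cases P) auto
  then obtain p2 P0 where P0: "P1 = add_mset p2 P0"
    using \<open>size P = k\<close> \<open>4 \<le> k\<close> by (cases P1) auto
  have "size P0 = k - 2" using \<open>size P = k\<close> P1 P0 by simp
  then have "P0 \<noteq> {#}" using \<open>4 \<le> k\<close> by auto
  obtain a1 where a1: "p1 = ({#a1#}, {#- a1#})" using pair[of p1] P1 by auto
  obtain a2 where a2: "p2 = ({#a2#}, {#- a2#})" using pair[of p2] P1 P0 by auto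
  define U0 where "U0 = sum_mset (image_mset fst P0)"
  define V0 where "V0 = sum_mset (image_mset snd P0)"
  have U: "U = {#a1, a2#} + U0" using P(2) P1 P0 a1 a2 unfolding U0_def by (simp add: add_mset_commute)
  have V: "V = {#- a1, - a2#} + V0" using P(3) P1 P0 a1 a2 unfolding V0_def by (simp add: add_mset_commute)
  obtain p where "p \<in># P0" using \<open>P0 \<noteq> {#}\<close> by blast
  then obtain a where "p = ({#a#}, {#- a#})" using pair[of p] P1 P0 by auto
  then have "a \<in># U0" using \<open>p \<in># P0\<close> unfolding U0_def by force
  then have proper: "{#a1, a2#} \<subset># U" using U by (auto simp: subset_mset.less_le)
  have "atom U" using witness unfolding daleth_witness_def by blast
  define F' where "F' = add_mset {#a1 + a2, - a1, - a2#} (image_mset (\<lambda>p. fst p + snd p) P0)"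
  have "sum_mset F' = {#a1 + a2, - a1, - a2#} + U0 + V0"
    unfolding F'_def U0_def V0_def by (simp add: sum_mset.distrib add.assoc)
  also have "\<dots> = merge_pair U a1 a2 + V"
    unfolding U V merge_pair_def by (simp add: add_mset_commute)
  finally have "sum_mset F' = merge_pair U a1 a2 + V" .
  moreover have "size F' = k - 1" using \<open>size P0 = k - 2\<close> \<open>4 \<le> k\<close> unfolding F'_def by simp
  moreover have "\<forall>W\<in>#F'. atom W"
    using atom_merged_pair_negatives[OF \<open>atom U\<close> proper] F(1) unfolding F'_def P(1)[symmetric] P1 P0 by auto
  ultimately have "k - 1 \<in> lengths (merge_pair U a1 a2 + V)" unfolding lengths_def by blast
  then show ?thesis
    using daleth_witness_merge_pair_pred[OF witness \<open>4 \<le> k\<close>] proper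
    by (meson subset_mset.less_imp_le)
qed

lemma ex_pair_subset_mset: "2 \<le> size A \<Longrightarrow> \<exists>g h. {#g, h#} \<subseteq># A"
proof -
  assume "2 \<le> size A"
  then obtain g A1 where A1: "A = add_mset g A1" by (cases A) auto
  then obtain h A2 where "A1 = add_mset h A2" using \<open>2 \<le> size A\<close> by (cases A1) auto
  then have "{#g, h#} \<subseteq># A" using A1 by simp
  then show ?thesis by blast
qed

lemma daleth_witness_merge_step:
  assumes "daleth_witness U V k" "4 \<le> k"
    and F: "\<forall>W\<in>#F. atom W" "sum_mset F = U + V" "size F = k"
    and "W \<in># F" "{#g, h#} \<subseteq># W" "{#g, h#} \<subseteq># U"
  shows "\<exists>U'. daleth_witness U' V (k - 1) \<or> (daleth_witness U' V k \<and> size U' < size U)"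
proof -
  have "k \<in> lengths (merge_pair U g h + V)"
    using size_mem_lengths_merge_pair[OF F(1,2) assms(6-8)] F(3) by simp
  then show ?thesis
    using daleth_witness_merge_pair[OF assms(1,2,8)] size_merge_pair[OF assms(8)] by blast
qed

lemma image_mset_mem_subset_sum_mset: "x \<in># M \<Longrightarrow> f x \<subseteq># sum_mset (image_mset f M)"
  by (metis image_mset_add_mset mset_subset_eq_add_left multi_member_split sum_mset.add_mset)

lemma factorization_split_cases [consumes 8, case_names left right singletons]:
  assumes "atom U" "atom V" "\<forall>W\<in>#F. atom W" "sum_mset F = U + V" "size F \<noteq> 2"
    and P: "image_mset (\<lambda>p. fst p + snd p) P = F" "sum_mset (image_mset fst P) = U"
      "sum_mset (image_mset snd P) = V"
  obtains (left) p where "p \<in># P" "2 \<le> size (fst p)"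
    | (right) p where "p \<in># P" "2 \<le> size (snd p)"
    | (singletons) "\<forall>p\<in>#P. size (fst p) = 1 \<and> size (snd p) = 1"
proof (cases "\<exists>p\<in>#P. 2 \<le> size (fst p) \<or> 2 \<le> size (snd p)")
  case True
  then show ?thesis using that(1,2) by blast
next
  case False
  have "size (fst p) = 1 \<and> size (snd p) = 1" if p: "p \<in># P" for p
  proof -
    have "fst p + snd p \<in># F" using p unfolding P(1)[symmetric] by simp
    moreover have "fst p \<subseteq># U" "snd p \<subseteq># V"
      using image_mset_mem_subset_sum_mset[OF p] P(2,3) by blast+
    ultimately have "fst p \<noteq> {#}" "snd p \<noteq> {#}"
      using atom_factor_not_subset[OF assms(1,2,3,4,5)] assms(4)
        atom_factor_not_subset[OF assms(2,1,3) _ assms(5)] by (auto simp: add.commute)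
    moreover have "size (fst p) < 2" "size (snd p) < 2" using False p by auto
    ultimately show ?thesis by (simp add: nonempty_has_size)
  qed
  then show ?thesis using that(3) by blast
qed

lemma daleth_witness_pred:
  "daleth_witness (U :: 'a::ab_group_add multiset) V k \<Longrightarrow> 4 \<le> k \<Longrightarrow>
     \<exists>U' V' :: 'a multiset. daleth_witness U' V' (k - 1)"
proof (induction "size U + size V" arbitrary: U V rule: less_induct)
  case less
  note witness = \<open>daleth_witness U V k\<close> and \<open>4 \<le> k\<close>
  then have "atom U" "atom V" "k \<in> lengths (U + V)" unfolding daleth_witness_def by auto
  then obtain F where F: "\<forall>W\<in>#F. atom W" "sum_mset F = U + V" "size F = k"
    unfolding lengths_def by blast
  then obtain P where P: "image_mset (\<lambda>p. fst p + snd p) P = F"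
      "sum_mset (image_mset fst P) = U" "sum_mset (image_mset snd P) = V"
    using sum_mset_split by blast
  have factor: "fst p + snd p \<in># F" if "p \<in># P" for p
    using that unfolding P(1)[symmetric] by simp
  have "size F \<noteq> 2" using F(3) \<open>4 \<le> k\<close> by simp
  show ?case
    using \<open>atom U\<close> \<open>atom V\<close> F(1,2) \<open>size F \<noteq> 2\<close> P
  proof (cases rule: factorization_split_cases)
    case (left p)
    then obtain g h where "{#g, h#} \<subseteq># fst p" using ex_pair_subset_mset by blast
    then have "{#g, h#} \<subseteq># fst p + snd p" "{#g, h#} \<subseteq># U"
      using image_mset_mem_subset_sum_mset[OF left(1), of fst] P(2)
      by (auto intro: subset_mset.order_trans)
    then obtain U' where "daleth_witness U' V (k - 1) \<or> (daleth_witness U' V k \<and> size U' < size U)"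
      using daleth_witness_merge_step[OF witness \<open>4 \<le> k\<close> F factor[OF left(1)]] by blast
    then show ?thesis using less.hyps[of U' V] \<open>4 \<le> k\<close> by auto
  next
    case (right p)
    then obtain g h where "{#g, h#} \<subseteq># snd p" using ex_pair_subset_mset by blast
    then have "{#g, h#} \<subseteq># fst p + snd p" "{#g, h#} \<subseteq># V"
      using image_mset_mem_subset_sum_mset[OF right(1), of snd] P(3)
      by (auto intro: subset_mset.order_trans)
    moreover have "sum_mset F = V + U" using F(2) by (simp add: add.commute)
    ultimately obtain V' where "daleth_witness V' U (k - 1) \<or> (daleth_witness V' U k \<and> size V' < size V)"
      using daleth_witness_merge_step[OF daleth_witness_swap[OF witness] \<open>4 \<le> k\<close> F(1) _ F(3)
          factor[OF right(1)]] by blast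
    then show ?thesis using less.hyps[of V' U] \<open>4 \<le> k\<close> daleth_witness_swap by fastforce
  next
    case singletons
    then show ?thesis
      using daleth_witness_pred_of_singleton_parts[OF witness \<open>4 \<le> k\<close> P F(1,3)] by blast
  qed
qed

lemma daleth_star_pred:
  "k \<in> daleth_star TYPE('a::ab_group_add) \<Longrightarrow> 4 \<le> k \<Longrightarrow> k - 1 \<in> daleth_star TYPE('a)"
  using daleth_witness_pred mem_daleth_star_iff by metis

lemma daleth_star_downward_closed:
  assumes "k \<in> daleth_star TYPE('a::ab_group_add)" "j \<le> k" "3 \<le> j"
  shows "j \<in> daleth_star TYPE('a)"
  using assms(2,3)
proof (induction j rule: inc_induct)
  case base
  show ?case by (rule assms(1))
next
  case (step n)
  then have "Suc n \<in> daleth_star TYPE('a)" by simp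
  then show ?case using daleth_star_pred[of "Suc n"] step.prems by simp
qed

theorem proposition3p3:
  shows "(daleth_star TYPE('a::{finite, ab_group_add}) = {} \<longleftrightarrow> card (UNIV :: 'a set) \<le> 2)
    \<and> (card (UNIV :: 'a set) \<ge> 3 \<longrightarrow>
         (\<exists>b::nat. 3 \<le> b \<and> daleth_star TYPE('a) = {3..b}))"
proof (intro conjI impI)
  let ?D = "daleth_star TYPE('a)"
  show "?D = {} \<longleftrightarrow> card (UNIV :: 'a set) \<le> 2"
    using daleth_star_card_le_2 three_mem_daleth_star by (metis empty_iff not_less_eq_eq numeral_3_eq_3
        numeral_2_eq_2)
  assume "3 \<le> card (UNIV :: 'a set)"
  then have "3 \<in> ?D" by (rule three_mem_daleth_star)
  have "finite ?D" using daleth_star_subset finite_subset by blast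
  define b where "b = Max ?D"
  have "b \<in> ?D" unfolding b_def using Max_in \<open>finite ?D\<close> \<open>3 \<in> ?D\<close> by blast
  moreover have "?D \<subseteq> {3..b}"
    using daleth_star_subset Max_ge[OF \<open>finite ?D\<close>] unfolding b_def by fastforce
  ultimately have "?D = {3..b}" using daleth_star_downward_closed by fastforce
  then show "\<exists>b. 3 \<le> b \<and> ?D = {3..b}" using \<open>b \<in> ?D\<close> by auto
qed

end
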